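(* Let $\beta>\beta_c$, $0\le\delta<\beta$ with $\delta\le\bar\delta(\beta)$, and let $\check\delta(\beta)$ be the unique solution in $(\beta/2,\beta)$ of $\mathcal L(\delta-\beta/2)=-\log\Gamma_\beta$. If $\delta_c(\beta)<\delta<\check\delta(\beta)$, then $\mathsf W_{\beta,\delta}$ is concave on $[0,1]$; if $\check\delta(\beta)<\delta<\beta$, then $\mathsf W_{\beta,\delta}$ is convex on $[0,1]$.
   Context: $\Gamma_\beta=\frac{e^{-\beta}+e^{-3\beta/2}}{1-e^{-\beta/2}}$, $\beta_c$ the unique positive solution of $\Gamma_\beta=1$. $c_\beta=\frac{1+e^{-\beta/2}}{1-e^{-\beta/2}}$, $\mathcal L(h)=\log\sum_{k\in\mathbb Z}e^{hk}e^{-\beta|k|/2}/c_\beta$ for $|h|<\beta/2$. $\mathcal G(h)=\int_0^1\mathcal L(h(x-\frac12))dx$, $\tilde h(q)$ the unique $h\in[0,\beta)$ with $\mathcal G'(h)=q$; $\mathcal H_\delta(s)=\int_0^1\mathcal L(sx+\delta-\frac\beta2)dx$ for $s\in(-\delta,\beta-\delta)$, $s_\delta(q)$ the unique solution of $\mathcal H_\delta'(s)=q$; $\delta_0(q)=\frac\beta2-\frac{\tilde h(q)}2$; $\psi(q,\delta)=\mathcal G(\tilde h(q))-q\tilde h(q)$ if $0\le\delta\le\delta_0(q)$, $\mathcal H_\delta(s_\delta(q))-qs_\delta(q)$ if $\delta_0(q)<\delta<\beta$; $T_\delta(a)=a\log\Gamma_\beta+a\psi(1/a^2,\delta)$. $x_\beta$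 is the unique solution in $(0,\beta/2)$ of $\mathcal L(x)=-\log\Gamma_\beta$ and $\bar\delta(\beta)=\beta\wedge\inf\{\delta\in(0,\beta):\mathcal H'_\delta(\frac\beta2-\delta-x_\beta)>0\}$; under the hypotheses $T_\delta$ has a unique maximizer $\bar a_{\beta,\delta}$ on $(0,\infty)$. $\delta_c(\beta)=\log(\cosh\beta-\sqrt{\cosh^2\beta-e^\beta})$. Define $\mathsf W_{\beta,\delta}(t)=\int_0^t\mathcal L'\big(s_\delta(\bar a_{\beta,\delta}^{-2})(1-x)+\delta-\frac\beta2\big)dx$ for $t\in[0,1]$. *)

theory Defs
  imports "HOL-Analysis.Analysis"
begin

definition Gam :: "real \<Rightarrow> real" where
  "Gam b = (exp (-b) + exp (-3*b/2)) / (1 - exp (-b/2))"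

definition beta_c :: real where
  "beta_c = (THE b. b > 0 \<and> Gam b = 1)"

definition cb :: "real \<Rightarrow> real" where
  "cb b = (1 + exp (-b/2)) / (1 - exp (-b/2))"

text \<open>L(h) = log sum over integers k of exp(h k) exp(-b |k|/2) / c_b (meaningful for |h| < b/2)\<close>
definition Lf :: "real \<Rightarrow> real \<Rightarrow> real" where
  "Lf b h = ln ((\<Sum>\<^sub>\<infinity>k\<in>(UNIV::int set). exp (h * of_int k) * exp (- b * \<bar>of_int k\<bar> / 2)) / cb b)"

definition Gf :: "real \<Rightarrow> real \<Rightarrow> real" where
  "Gf b h = integral {0..1} (\<lambda>x. Lf b (h * (x - 1/2)))"

definition htilde :: "real \<Rightarrow> real \<Rightarrow> real" where
  "htilde b q = (THE h. 0 \<le> h \<and> h < b \<and> deriv (Gf b) h = q)"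

definition Hf :: "real \<Rightarrow> real \<Rightarrow> real \<Rightarrow> real" where
  "Hf b d s = integral {0..1} (\<lambda>x. Lf b (s * x + d - b/2))"

definition sdelta :: "real \<Rightarrow> real \<Rightarrow> real \<Rightarrow> real" where
  "sdelta b d q = (THE s. -d < s \<and> s < b - d \<and> deriv (Hf b d) s = q)"

definition delta0 :: "real \<Rightarrow> real \<Rightarrow> real" where
  "delta0 b q = b/2 - htilde b q / 2"

definition psi :: "real \<Rightarrow> real \<Rightarrow> real \<Rightarrow> real" where
  "psi b q d = (if 0 \<le> d \<and> d \<le> delta0 b q then Gf b (htilde b q) - q * htilde b q
               else Hf b d (sdelta b d q) - q * sdelta b d q)"

definition Tf :: "real \<Rightarrow> real \<Rightarrow> real \<Rightarrow> real" where
  "Tf b d a = a * ln (Gam b) + a * psi b (1 / a^2) d"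

definition xbeta :: "real \<Rightarrow> real" where
  "xbeta b = (THE x. 0 < x \<and> x < b/2 \<and> Lf b x = - ln (Gam b))"

text \<open>bar delta = min(b, inf S), with inf of the empty set read as +infinity\<close>
definition deltabar :: "real \<Rightarrow> real" where
  "deltabar b = (let S = {d. 0 < d \<and> d < b \<and> deriv (Hf b d) (b/2 - d - xbeta b) > 0}
                 in if S = {} then b else min b (Inf S))"

definition abar :: "real \<Rightarrow> real \<Rightarrow> real" where
  "abar b d = (THE a. 0 < a \<and> (\<forall>a'. 0 < a' \<longrightarrow> Tf b d a' \<le> Tf b d a))"

definition delta_c :: "real \<Rightarrow> real" where
  "delta_c b = ln (cosh b - sqrt ((cosh b)^2 - exp b))"

definition deltacheck :: "real \<Rightarrow> real" where
  "deltacheck b = (THE d. b/2 < d \<and> d < b \<and> Lf b (d - b/2) = - ln (Gam b))"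

definition Wf :: "real \<Rightarrow> real \<Rightarrow> real \<Rightarrow> real" where
  "Wf b d t = integral {0..t}
     (\<lambda>x. deriv (Lf b) (sdelta b d ((abar b d) powr (-2)) * (1 - x) + d - b/2))"

end

theory Submission
  imports Defs "HOL-Real_Asymp.Real_Asymp"
begin

(* Summing the two geometric series gives L in closed form on |h| < \<beta>/2: it is even,
   L'' \<ge> exp (-\<beta>), and it blows up at \<beta>/2. Since H_\<delta> and G integrate L along segments,
   their derivatives are strictly increasing and unbounded, so s_\<delta> and h~ are well defined,
   and the inverse function rule together with an integration by parts gives
   T_\<delta>'(a) = log \<Gamma>_\<beta> + L (s_\<delta>(a^-2) + \<delta> - \<beta>/2).
   When H_\<delta>'(\<beta>/2 - \<delta> - x_\<beta>) \<le> 0 (for \<beta>/2 < \<delta> < \<delta>check by a trapezoidal bound, and for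
   \<delta> \<le> \<delta>bar by the definition of \<delta>bar and continuity), this derivative changes sign exactly
   once, where s_\<delta>(a^-2) = x_\<beta> - (\<delta> - \<beta>/2) = \<delta>check - \<delta>. Then
   W'(t) = L'(s (1 - t) + \<delta> - \<beta>/2) is decreasing in t for s \<ge> 0 and increasing for s \<le> 0,
   so W is concave below \<delta>check and convex above it. For \<delta> \<le> \<beta>/2 no optimisation is
   needed: H_\<delta>'(0) = L'(\<delta> - \<beta>/2)/2 \<le> 0 already forces s \<ge> 0. *)

section \<open>The closed form of L\<close>

lemma has_sum_geometric_real:
  fixes r :: real
  assumes "0 \<le> r" "r < 1"
  shows "((\<lambda>n::nat. r ^ n) has_sum (1 / (1 - r))) UNIV"
  by (rule sums_nonneg_imp_has_sum) (use assms geometric_sums[of r] in auto)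

lemma Lf_series_has_sum:
  fixes b h :: real
  assumes "h \<in> {-b/2<..<b/2}"
  shows "((\<lambda>k::int. exp (h * of_int k) * exp (- b * \<bar>of_int k\<bar> / 2)) has_sum
           (1 / (1 - exp (h - b/2)) + exp (-h - b/2) / (1 - exp (-h - b/2)))) UNIV"
proof -
  define f where "f = (\<lambda>k::int. exp (h * of_int k) * exp (- b * \<bar>of_int k\<bar> / 2))"
  define r1 where "r1 = exp (h - b/2)"
  define r2 where "r2 = exp (-h - b/2)"
  have r1: "0 < r1" "r1 < 1" and r2: "0 < r2" "r2 < 1"
    using assms unfolding r1_def r2_def by auto
  have "f \<circ> int = (\<lambda>n. r1 ^ n)"
    by (auto simp: f_def r1_def fun_eq_iff exp_of_nat_mult[symmetric] exp_add[symmetric] algebra_simps)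
  then have nonneg: "(f has_sum (1 / (1 - r1))) (range int)"
    using has_sum_geometric_real[of r1] r1 by (subst has_sum_reindex) auto
  have "f \<circ> (\<lambda>n::nat. - int n - 1) = (\<lambda>n. r2 * r2 ^ n)"
    by (auto simp: f_def r2_def fun_eq_iff exp_of_nat_mult[symmetric] exp_add[symmetric] algebra_simps)
  then have neg: "(f has_sum (r2 / (1 - r2))) (range (\<lambda>n::nat. - int n - 1))"
    using has_sum_cmult_right[OF has_sum_geometric_real[of r2], of r2] r2
    by (subst has_sum_reindex) (auto simp: inj_on_def)
  have "range int \<union> range (\<lambda>n::nat. - int n - 1) = UNIV"
  proof (intro set_eqI iffI)
    fix k :: int
    show "k \<in> range int \<union> range (\<lambda>n::nat. - int n - 1)"
    proof (cases "k \<ge> 0")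
      case True
      then show ?thesis by (auto intro!: image_eqI[of _ _ "nat k"])
    next
      case False
      then show ?thesis by (auto intro!: image_eqI[of _ _ "nat (- k - 1)"])
    qed
  qed simp
  with has_sum_Un_disjoint[OF nonneg neg] show ?thesis
    unfolding f_def r1_def r2_def by fastforce
qed

lemma cb_pos: "b > 0 \<Longrightarrow> cb b > 0"
  unfolding cb_def by (auto intro!: divide_pos_pos add_pos_pos)

definition L0 :: "real \<Rightarrow> real \<Rightarrow> real" where
  "L0 b h = ln (1 - exp (-b)) - ln (1 - exp (h - b/2)) - ln (1 - exp (-h - b/2)) - ln (cb b)"

definition L1 :: "real \<Rightarrow> real \<Rightarrow> real" where
  "L1 b h = exp (h - b/2) / (1 - exp (h - b/2)) - exp (-h - b/2) / (1 - exp (-h - b/2))"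

definition L2 :: "real \<Rightarrow> real \<Rightarrow> real" where
  "L2 b h = exp (h - b/2) / (1 - exp (h - b/2))^2 + exp (-h - b/2) / (1 - exp (-h - b/2))^2"

lemma Lf_eq_L0:
  assumes "b > 0" "h \<in> {-b/2<..<b/2}"
  shows "Lf b h = L0 b h"
proof -
  define r1 where "r1 = exp (h - b/2)"
  define r2 where "r2 = exp (-h - b/2)"
  have r1: "0 < r1" "r1 < 1" and r2: "0 < r2" "r2 < 1"
    using assms unfolding r1_def r2_def by auto
  have "r1 * r2 = exp (-b)"
    unfolding r1_def r2_def by (simp add: exp_add[symmetric])
  then have sum: "1 / (1 - r1) + r2 / (1 - r2) = (1 - exp (-b)) / ((1 - r1) * (1 - r2))"
    using r1 r2 by (simp add: field_simps)
  have "Lf b h = ln ((1 - exp (-b)) / ((1 - r1) * (1 - r2)) / cb b)"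
    unfolding Lf_def using infsumI[OF Lf_series_has_sum[OF assms(2)]] sum r1_def r2_def by simp
  also have "\<dots> = L0 b h"
    unfolding L0_def r1_def[symmetric] r2_def[symmetric]
    using r1 r2 assms cb_pos[of b] by (simp add: ln_div ln_mult)
  finally show ?thesis .
qed

lemma L0_has_real_derivative:
  assumes "h \<in> {-b/2<..<b/2}"
  shows "(L0 b has_real_derivative L1 b h) (at h)"
proof -
  have "h - b/2 < 0" "-h - b/2 < 0" using assms by auto
  then have "exp (h - b/2) < 1" "exp (-h - b/2) < 1" by auto
  then show ?thesis unfolding L0_def L1_def
    by - (rule derivative_eq_intros refl | simp add: field_simps)+
qed

lemma L1_has_real_derivative:
  assumes "h \<in> {-b/2<..<b/2}"
  shows "(L1 b has_real_derivative L2 b h) (at h)"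
proof -
  have "h - b/2 < 0" "-h - b/2 < 0" using assms by auto
  then have "exp (h - b/2) < 1" "exp (-h - b/2) < 1" by auto
  then show ?thesis unfolding L1_def L2_def
    by - (rule derivative_eq_intros refl | simp add: field_simps power2_eq_square)+
qed

lemma L2_ge_exp:
  assumes "h \<in> {-b/2<..<b/2}"
  shows "L2 b h \<ge> exp (-b)"
proof -
  define y where "y = h - b/2"
  have y: "-b < y" "y < 0" using assms unfolding y_def by auto
  then have "(1 - exp y)^2 \<le> 1" "(1 - exp y)^2 > 0"
    by (auto simp: power2_eq_square mult_le_one)
  then have "exp y \<le> exp y / (1 - exp y)^2"
    by (simp add: divide_simps)
  moreover have "exp (-b) \<le> exp y" using y by simp
  moreover have "0 \<le> exp (-h - b/2) / (1 - exp (-h - b/2))^2" by simp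
  ultimately show ?thesis unfolding L2_def y_def by linarith
qed

lemma L1_diff_ge:
  assumes "u \<in> {-b/2<..<b/2}" "v \<in> {-b/2<..<b/2}" "u \<le> v"
  shows "exp (-b) * (v - u) \<le> L1 b v - L1 b u"
proof -
  have "L1 b u - exp (-b) * u \<le> L1 b v - exp (-b) * v"
  proof (rule DERIV_nonneg_imp_nondecreasing[OF assms(3)])
    fix x assume "u \<le> x" "x \<le> v"
    then have "x \<in> {-b/2<..<b/2}" using assms by auto
    then show "\<exists>y. ((\<lambda>x. L1 b x - exp (-b) * x) has_real_derivative y) (at x) \<and> y \<ge> 0"
      by (intro exI[of _ "L2 b x - exp (-b)"])
         (use L2_ge_exp L1_has_real_derivative in \<open>auto intro!: derivative_eq_intros\<close>)
  qed
  then show ?thesis by (simp add: algebra_simps)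
qed

lemma L1_mono:
  assumes "u \<in> {-b/2<..<b/2}" "v \<in> {-b/2<..<b/2}" "u \<le> v"
  shows "L1 b u \<le> L1 b v"
proof -
  have "0 \<le> exp (-b) * (v - u)" using assms(3) by simp
  with L1_diff_ge[OF assms] show ?thesis by linarith
qed

lemma L1_zero [simp]: "L1 b 0 = 0"
  unfolding L1_def by simp

lemma L0_minus [simp]: "L0 b (- h) = L0 b h"
  unfolding L0_def by simp

lemma L0_abs [simp]: "L0 b \<bar>h\<bar> = L0 b h"
  by (cases "h \<ge> 0") auto

lemma L0_zero:
  assumes "b > 0"
  shows "L0 b 0 = 0"
proof -
  define t where "t = exp (-b/2)"
  have t: "0 < t" "t < 1" using assms unfolding t_def by auto
  have "exp (-b) = t * t"
    unfolding t_def by (simp add: exp_add[symmetric])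
  then have "L0 b 0 = ln ((1 - t) * (1 + t)) - ln (1 - t) - ln (1 - t) - ln ((1 + t) / (1 - t))"
    unfolding L0_def cb_def t_def by (simp add: algebra_simps)
  then show ?thesis using t by (simp add: ln_mult ln_div)
qed

lemma L1_pos:
  assumes "0 < h" "h < b/2"
  shows "L1 b h > 0"
proof -
  have "exp (-b) * (h - 0) \<le> L1 b h - L1 b 0"
    using assms by (intro L1_diff_ge) auto
  moreover have "0 < exp (-b) * h" using assms by simp
  ultimately show ?thesis by simp
qed

lemma L1_neg:
  assumes "-b/2 < h" "h < 0"
  shows "L1 b h < 0"
  using L1_pos[of "- h" b] assms unfolding L1_def by simp

lemma L0_strict_mono:
  assumes "0 \<le> u" "u < v" "v < b/2"
  shows "L0 b u < L0 b v"
proof (rule DERIV_pos_imp_increasing_open[OF assms(2)])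
  fix x assume "u < x" "x < v"
  then show "\<exists>y. (L0 b has_real_derivative y) (at x) \<and> 0 < y"
    using assms by (intro exI[of _ "L1 b x"] conjI L0_has_real_derivative L1_pos) auto
next
  show "continuous_on {u..v} (L0 b)"
    using assms by (intro continuous_at_imp_continuous_on ballI DERIV_isCont[OF L0_has_real_derivative]) auto
qed

lemma L0_inj_nonneg:
  assumes "0 \<le> u" "u < b/2" "0 \<le> v" "v < b/2" "L0 b u = L0 b v"
  shows "u = v"
proof (rule ccontr)
  assume "u \<noteq> v"
  then consider "u < v" | "v < u" by linarith
  then show False
    using L0_strict_mono[of u v b] L0_strict_mono[of v u b] assms by cases auto
qed

lemma L0_mono_abs:
  assumes "\<bar>u\<bar> \<le> \<bar>v\<bar>" "\<bar>v\<bar> < b/2"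
  shows "L0 b u \<le> L0 b v"
  using L0_strict_mono[of "\<bar>u\<bar>" "\<bar>v\<bar>" b] assms L0_abs[of b u] L0_abs[of b v]
  by (cases "\<bar>u\<bar> = \<bar>v\<bar>") auto

lemma L0_nonneg:
  assumes "b > 0" "h \<in> {-b/2<..<b/2}"
  shows "L0 b h \<ge> 0"
proof -
  have "\<bar>h\<bar> < b/2" unfolding abs_less_iff using assms(2) by auto
  then show ?thesis using L0_mono_abs[of 0 h b] L0_zero[OF assms(1)] by simp
qed

lemma convex_on_L0: "convex_on {-b/2<..<b/2} (L0 b)"
  by (rule convex_on_realI[where f'="L1 b"]) (auto intro!: L0_has_real_derivative L1_mono)

lemma continuous_on_L0: "continuous_on {-b/2<..<b/2} (L0 b)"
  by (intro continuous_at_imp_continuous_on ballI DERIV_isCont[OF L0_has_real_derivative]) auto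

lemma continuous_on_L1: "continuous_on {-b/2<..<b/2} (L1 b)"
  by (intro continuous_at_imp_continuous_on ballI DERIV_isCont[OF L1_has_real_derivative]) auto

lemma continuous_on_L2: "continuous_on {-b/2<..<b/2} (L2 b)"
  unfolding L2_def by (intro continuous_intros) auto

lemma continuous_on_compose_domain:
  fixes b :: real
  assumes "continuous_on {-b/2<..<b/2} g" "continuous_on S \<phi>" "\<And>z. z \<in> S \<Longrightarrow> \<phi> z \<in> {-b/2<..<b/2}"
  shows "continuous_on S (\<lambda>z. g (\<phi> z))"
  by (rule continuous_on_compose2[OF assms(1,2)]) (auto dest: assms(3))

lemma Lf_has_real_derivative:
  assumes "b > 0" "h \<in> {-b/2<..<b/2}"
  shows "(Lf b has_real_derivative L1 b h) (at h)"
  by (rule has_field_derivative_transform_within_open[OF L0_has_real_derivative[OF assms(2)],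
        of "{-b/2<..<b/2}"]) (use assms Lf_eq_L0 in auto)

lemma L0_tendsto_at_top: "b > 0 \<Longrightarrow> filterlim (L0 b) at_top (at_left (b/2))"
  unfolding L0_def by real_asymp

lemma L0_unbounded:
  assumes "b > 0"
  obtains h where "0 < h" "h < b/2" "K < L0 b h"
proof -
  have "\<forall>\<^sub>F h in at_left (b/2). K < L0 b h \<and> h \<in> {0<..<b/2}"
    using L0_tendsto_at_top[OF assms] assms
    by (intro eventually_conj eventually_at_left_real) (auto simp: filterlim_at_top_dense)
  from eventually_happens'[OF trivial_limit_at_left_real this] show ?thesis
    using that by auto
qed

section \<open>Integrals of L along segments\<close>

lemma integral_affine_unit:
  fixes \<alpha> \<gamma> :: real
  shows "integral {0..1} (\<lambda>x. \<alpha> + \<gamma> * x) = \<alpha> + \<gamma> / 2"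
proof -
  have "((\<lambda>x. \<alpha> + \<gamma> * x) has_integral ((\<alpha> * 1 + \<gamma> * 1^2 / 2) - (\<alpha> * 0 + \<gamma> * 0^2 / 2))) {0..1}"
    by (rule fundamental_theorem_of_calculus)
       (auto intro!: derivative_eq_intros simp: has_real_derivative_iff_has_vector_derivative[symmetric])
  then show ?thesis by (simp add: integral_unique)
qed

lemma integral_shifted_square:
  fixes e :: real
  shows "integral {0..1} (\<lambda>x. (x + e)^2) = (e + 1/2)^2 + 1/12"
proof -
  have "((\<lambda>x. (x + e)^2) has_integral ((1 + e)^3 / 3 - (0 + e)^3 / 3)) {0..1}"
    by (rule fundamental_theorem_of_calculus)
       (auto intro!: derivative_eq_intros
             simp: has_real_derivative_iff_has_vector_derivative[symmetric] power2_eq_square)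
  then show ?thesis
    by (simp add: integral_unique power2_eq_square power3_eq_cube field_simps)
qed

lemma integral_param_has_real_derivative:
  fixes f f' :: "real \<Rightarrow> real \<Rightarrow> real"
  assumes "s0 \<in> {lo<..<hi}"
    and "\<And>s x. s \<in> {lo<..<hi} \<Longrightarrow> x \<in> {0..1} \<Longrightarrow> ((\<lambda>s. f s x) has_real_derivative f' s x) (at s)"
    and "\<And>s. s \<in> {lo<..<hi} \<Longrightarrow> continuous_on {0..1} (f s)"
    and "continuous_on ({lo<..<hi} \<times> {0..1}) (\<lambda>(s, x). f' s x)"
  shows "((\<lambda>s. integral {0..1} (f s)) has_real_derivative integral {0..1} (f' s0)) (at s0)"
proof -
  have "((\<lambda>s. integral (cbox 0 1) (f s)) has_real_derivative integral (cbox 0 1) (f' s0))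
          (at s0 within {lo<..<hi})"
    by (rule leibniz_rule_field_derivative)
       (use assms in \<open>auto intro: has_field_derivative_at_within integrable_continuous_interval
                      simp: cbox_interval\<close>)
  moreover have "at s0 within {lo<..<hi} = at s0"
    using assms(1) by (intro at_within_open) auto
  ultimately show ?thesis by (simp add: cbox_interval)
qed

text \<open>\<open>K0 b e c s\<close> integrates \<open>L0 b\<close> along \<open>x \<mapsto> s (x + e) + c\<close>, \<open>x \<in> [0, 1]\<close>;
  \<open>Hf b d\<close> and \<open>Gf b\<close> are the cases \<open>e = 0, c = d - b/2\<close> and \<open>e = -1/2, c = 0\<close>.\<close>

definition lines_in_domain :: "real \<Rightarrow> real \<Rightarrow> real \<Rightarrow> real \<Rightarrow> real \<Rightarrow> bool" where
  "lines_in_domain b e c lo hi \<longleftrightarrow> (\<forall>s\<in>{lo<..<hi}. \<forall>x\<in>{0..1}. s * (x + e) + c \<in> {-b/2<..<b/2})"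

definition K0 :: "real \<Rightarrow> real \<Rightarrow> real \<Rightarrow> real \<Rightarrow> real" where
  "K0 b e c s = integral {0..1} (\<lambda>x. L0 b (s * (x + e) + c))"

definition K1 :: "real \<Rightarrow> real \<Rightarrow> real \<Rightarrow> real \<Rightarrow> real" where
  "K1 b e c s = integral {0..1} (\<lambda>x. (x + e) * L1 b (s * (x + e) + c))"

definition K2 :: "real \<Rightarrow> real \<Rightarrow> real \<Rightarrow> real \<Rightarrow> real" where
  "K2 b e c s = integral {0..1} (\<lambda>x. (x + e)^2 * L2 b (s * (x + e) + c))"

context
  fixes b e c lo hi :: real
  assumes lines: "lines_in_domain b e c lo hi"
begin

lemma line_in_domain: "s \<in> {lo<..<hi} \<Longrightarrow> x \<in> {0..1} \<Longrightarrow> s * (x + e) + c \<in> {-b/2<..<b/2}"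
  using lines unfolding lines_in_domain_def by blast

lemma continuous_on_line:
  assumes "continuous_on {-b/2<..<b/2} g" "s \<in> {lo<..<hi}"
  shows "continuous_on {0..1} (\<lambda>x. g (s * (x + e) + c))"
  using line_in_domain[OF assms(2)]
  by (intro continuous_on_compose_domain[OF assms(1)] continuous_intros) auto

lemma continuous_on_lines:
  assumes "continuous_on {-b/2<..<b/2} g"
  shows "continuous_on ({lo<..<hi} \<times> {0..1}) (\<lambda>(s, x). g (s * (x + e) + c))"
  using line_in_domain unfolding case_prod_beta
  by (intro continuous_on_compose_domain[OF assms] continuous_intros) auto

lemma K0_has_real_derivative:
  assumes "s \<in> {lo<..<hi}"
  shows "(K0 b e c has_real_derivative K1 b e c s) (at s)"
  unfolding K0_def K1_def
proof (rule integral_param_has_real_derivative[OF assms])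
  fix s x :: real assume sx: "s \<in> {lo<..<hi}" "x \<in> {0..1}"
  have "((\<lambda>s. s * (x + e) + c) has_real_derivative x + e) (at s)"
    by (auto intro!: derivative_eq_intros)
  from DERIV_chain2[OF L0_has_real_derivative[OF line_in_domain[OF sx]] this]
  show "((\<lambda>s. L0 b (s * (x + e) + c)) has_real_derivative (x + e) * L1 b (s * (x + e) + c)) (at s)"
    by (simp add: mult.commute)
qed (auto intro!: continuous_intros continuous_on_line continuous_on_L0
         continuous_on_lines[OF continuous_on_L1, unfolded case_prod_beta]
         simp: case_prod_beta)

lemma K1_has_real_derivative:
  assumes "s \<in> {lo<..<hi}"
  shows "(K1 b e c has_real_derivative K2 b e c s) (at s)"
  unfolding K1_def K2_def
proof (rule integral_param_has_real_derivative[OF assms])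
  fix s x :: real assume sx: "s \<in> {lo<..<hi}" "x \<in> {0..1}"
  have "((\<lambda>s. s * (x + e) + c) has_real_derivative x + e) (at s)"
    by (auto intro!: derivative_eq_intros)
  from DERIV_chain2[OF L1_has_real_derivative[OF line_in_domain[OF sx]] this]
  show "((\<lambda>s. (x + e) * L1 b (s * (x + e) + c)) has_real_derivative
          (x + e)^2 * L2 b (s * (x + e) + c)) (at s)"
    by (auto intro!: derivative_eq_intros simp: power2_eq_square algebra_simps)
qed (auto intro!: continuous_intros continuous_on_line continuous_on_L1
         continuous_on_lines[OF continuous_on_L2, unfolded case_prod_beta]
         simp: case_prod_beta)

lemma K2_pos:
  assumes "s \<in> {lo<..<hi}"
  shows "K2 b e c s > 0"
proof -
  have "integral {0..1} (\<lambda>x. exp (-b) * (x + e)^2) \<le> K2 b e c s"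
    unfolding K2_def
  proof (rule integral_le)
    fix x :: real assume "x \<in> {0..1}"
    then have "exp (-b) \<le> L2 b (s * (x + e) + c)"
      by (intro L2_ge_exp line_in_domain[OF assms])
    from mult_right_mono[OF this zero_le_power2[of "x + e"]]
    show "exp (-b) * (x + e)^2 \<le> (x + e)^2 * L2 b (s * (x + e) + c)"
      by (simp add: mult.commute)
  qed (auto intro!: integrable_continuous_interval continuous_intros
                    continuous_on_line[OF continuous_on_L2 assms])
  moreover have "integral {0..1} (\<lambda>x. exp (-b) * (x + e)^2) > 0"
    using integral_shifted_square[of e] by (simp add: add_nonneg_pos)
  ultimately show ?thesis by linarith
qed

lemma K1_strict_mono:
  assumes "s \<in> {lo<..<hi}" "t \<in> {lo<..<hi}" "s < t"
  shows "K1 b e c s < K1 b e c t"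
proof (rule DERIV_pos_imp_increasing[OF assms(3)])
  fix x assume "s \<le> x" "x \<le> t"
  then have "x \<in> {lo<..<hi}" using assms by auto
  then show "\<exists>y. (K1 b e c has_real_derivative y) (at x) \<and> 0 < y"
    using K1_has_real_derivative K2_pos by blast
qed

lemma K1_mono:
  assumes "s \<in> {lo<..<hi}" "t \<in> {lo<..<hi}" "s \<le> t"
  shows "K1 b e c s \<le> K1 b e c t"
  using K1_strict_mono[OF assms(1,2)] assms(3) by (cases "s = t") auto

lemma K1_inj:
  assumes "s \<in> {lo<..<hi}" "t \<in> {lo<..<hi}" "K1 b e c s = K1 b e c t"
  shows "s = t"
  using K1_strict_mono[OF assms(1,2)] K1_strict_mono[OF assms(2,1)] assms(3)
  by (cases s t rule: linorder_cases) auto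

lemma K1_attains:
  assumes "s \<in> {lo<..<hi}" "t \<in> {lo<..<hi}" "K1 b e c s \<le> q" "q \<le> K1 b e c t"
  obtains u where "s \<le> u" "u \<le> t" "K1 b e c u = q"
proof -
  have "s \<le> t"
    using K1_strict_mono[OF assms(2,1)] assms(3,4) by force
  moreover have "continuous_on {s..t} (K1 b e c)"
    by (intro continuous_at_imp_continuous_on ballI DERIV_isCont[OF K1_has_real_derivative])
       (use assms(1,2) in auto)
  ultimately show ?thesis
    using IVT'[of "K1 b e c" s q t] assms(3,4) that by auto
qed

lemma K0_le_trapezoid:
  assumes "s \<in> {lo<..<hi}"
  shows "K0 b e c s \<le> (L0 b (s * e + c) + L0 b (s * (1 + e) + c)) / 2"
proof -
  let ?u = "s * e + c" and ?v = "s * (1 + e) + c"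
  have ends: "?u \<in> {-b/2<..<b/2}" "?v \<in> {-b/2<..<b/2}"
    using line_in_domain[OF assms, of 0] line_in_domain[OF assms, of 1] by simp_all
  have "K0 b e c s \<le> integral {0..1} (\<lambda>x. L0 b ?u + (L0 b ?v - L0 b ?u) * x)"
    unfolding K0_def
  proof (rule integral_le)
    fix x :: real assume x: "x \<in> {0..1}"
    have "L0 b ((1 - x) *\<^sub>R ?u + x *\<^sub>R ?v) \<le> (1 - x) * L0 b ?u + x * L0 b ?v"
      by (rule convex_onD[OF convex_on_L0]) (use x ends in auto)
    then show "L0 b (s * (x + e) + c) \<le> L0 b ?u + (L0 b ?v - L0 b ?u) * x"
      by (simp add: algebra_simps)
  qed (auto intro!: integrable_continuous_interval continuous_intros
                    continuous_on_line[OF continuous_on_L0 assms])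
  then show ?thesis
    unfolding integral_affine_unit by (simp add: field_simps)
qed

lemma K0_by_parts:
  assumes "s \<in> {lo<..<hi}"
  shows "s * K1 b e c s = (1 + e) * L0 b (s * (1 + e) + c) - e * L0 b (s * e + c) - K0 b e c s"
proof -
  define F where "F = (\<lambda>x. (x + e) * L0 b (s * (x + e) + c))"
  define F' where "F' = (\<lambda>x. L0 b (s * (x + e) + c) + s * ((x + e) * L1 b (s * (x + e) + c)))"
  have "(F' has_integral (F 1 - F 0)) {0..1}"
  proof (rule fundamental_theorem_of_calculus)
    fix x :: real assume x: "x \<in> {0..1}"
    have "((\<lambda>x. s * (x + e) + c) has_real_derivative s) (at x)"
      by (auto intro!: derivative_eq_intros)
    from DERIV_chain2[OF L0_has_real_derivative[OF line_in_domain[OF assms x]] this]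
    have "(F has_real_derivative F' x) (at x)"
      unfolding F_def F'_def by (auto intro!: derivative_eq_intros simp: algebra_simps)
    then show "(F has_vector_derivative F' x) (at x within {0..1})"
      by (simp add: has_real_derivative_iff_has_vector_derivative[symmetric] has_field_derivative_at_within)
  qed simp
  moreover have "integral {0..1} F' = K0 b e c s + s * K1 b e c s"
    unfolding F'_def K0_def K1_def
    by (subst integral_add)
       (auto intro!: integrable_continuous_interval continuous_intros
             continuous_on_line[OF continuous_on_L0 assms] continuous_on_line[OF continuous_on_L1 assms])
  ultimately show ?thesis
    unfolding F_def by (auto dest!: integral_unique simp: algebra_simps)
qed

lemma K1_trapezoid_lower:
  assumes "s \<in> {lo<..<hi}"
  shows "(e + 1/2) * (L0 b (s * (1 + e) + c) - L0 b (s * e + c)) \<le> s * K1 b e c s"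
  using K0_by_parts[OF assms] K0_le_trapezoid[OF assms] by (simp add: field_simps)

end

section \<open>The functions H and G and the inverse of H'\<close>

lemma convex_comb_in_domain:
  fixes x u v :: real
  assumes "0 \<le> x" "x \<le> 1" "u \<in> {-b/2<..<b/2}" "v \<in> {-b/2<..<b/2}"
  shows "(1 - x) * u + x * v \<in> {-b/2<..<b/2}"
  using convexD[of "{-b/2<..<b/2}" u v "1 - x" x] assms by (simp add: convex_real_interval)

lemma lines_in_domain_H:
  assumes "0 < d" "d < b"
  shows "lines_in_domain b 0 (d - b/2) (-d) (b - d)"
  unfolding lines_in_domain_def
proof (intro ballI)
  fix s x :: real assume "s \<in> {-d<..<b - d}" "x \<in> {0..1}"
  moreover have "s * (x + 0) + (d - b/2) = (1 - x) * (d - b/2) + x * (s + d - b/2)"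
    by (simp add: field_simps)
  ultimately show "s * (x + 0) + (d - b/2) \<in> {-b/2<..<b/2}"
    using assms by (simp only:) (intro convex_comb_in_domain; auto)
qed

lemma lines_in_domain_G:
  assumes "0 < b"
  shows "lines_in_domain b (-1/2) 0 (-b) b"
  unfolding lines_in_domain_def
proof (intro ballI)
  fix s x :: real assume "s \<in> {-b<..<b}" "x \<in> {0..1}"
  moreover have "s * (x + -1/2) + 0 = (1 - x) * (- s/2) + x * (s/2)"
    by (simp add: field_simps)
  ultimately show "s * (x + -1/2) + 0 \<in> {-b/2<..<b/2}"
    using assms by (simp only:) (intro convex_comb_in_domain; auto)
qed

lemma Hf_eq_K0:
  assumes "0 < d" "d < b" "s \<in> {-d<..<b - d}"
  shows "Hf b d s = K0 b 0 (d - b/2) s"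
  unfolding Hf_def K0_def
proof (rule integral_cong)
  fix x :: real assume "x \<in> {0..1}"
  then have "Lf b (s * (x + 0) + (d - b/2)) = L0 b (s * (x + 0) + (d - b/2))"
    using assms by (intro Lf_eq_L0 line_in_domain[OF lines_in_domain_H]) auto
  then show "Lf b (s * x + d - b/2) = L0 b (s * (x + 0) + (d - b/2))"
    by (simp add: algebra_simps)
qed

lemma Gf_eq_K0:
  assumes "0 < b" "h \<in> {-b<..<b}"
  shows "Gf b h = K0 b (-1/2) 0 h"
  unfolding Gf_def K0_def
proof (rule integral_cong)
  fix x :: real assume "x \<in> {0..1}"
  then have "Lf b (h * (x + -1/2) + 0) = L0 b (h * (x + -1/2) + 0)"
    using assms by (intro Lf_eq_L0 line_in_domain[OF lines_in_domain_G]) auto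
  then show "Lf b (h * (x - 1/2)) = L0 b (h * (x + -1/2) + 0)"
    by simp
qed

lemma deriv_Hf:
  assumes "0 < d" "d < b" "s \<in> {-d<..<b - d}"
  shows "deriv (Hf b d) s = K1 b 0 (d - b/2) s"
  by (rule DERIV_imp_deriv, rule has_field_derivative_transform_within_open
        [OF K0_has_real_derivative[OF lines_in_domain_H[OF assms(1,2)] assms(3)], of "{-d<..<b - d}"])
     (use assms Hf_eq_K0 in auto)

lemma deriv_Gf:
  assumes "0 < b" "h \<in> {-b<..<b}"
  shows "deriv (Gf b) h = K1 b (-1/2) 0 h"
  by (rule DERIV_imp_deriv, rule has_field_derivative_transform_within_open
        [OF K0_has_real_derivative[OF lines_in_domain_G[OF assms(1)] assms(2)], of "{-b<..<b}"])
     (use assms Gf_eq_K0 in auto)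

lemma K1_H_unbounded:
  assumes "0 < d" "d < b"
  obtains s where "s \<in> {-d<..<b - d}" "q \<le> K1 b 0 (d - b/2) s"
proof -
  let ?c = "d - b/2"
  have c: "\<bar>?c\<bar> < b/2" unfolding abs_less_iff using assms by auto
  have "0 < b" "0 \<le> 2 * (b * \<bar>q\<bar>)" using assms by auto
  then obtain h where h: "0 < h" "h < b/2" "L0 b ?c + 2 * (b * \<bar>q\<bar>) < L0 b h"
    using L0_unbounded[where K = "L0 b ?c + 2 * (b * \<bar>q\<bar>)"] by blast
  have "\<bar>?c\<bar> < h"
  proof (rule ccontr)
    assume "\<not> \<bar>?c\<bar> < h"
    then have "L0 b h \<le> L0 b ?c" using L0_mono_abs[of h ?c b] c h by auto
    with h(3) \<open>0 \<le> 2 * (b * \<bar>q\<bar>)\<close> show False by linarith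
  qed
  define s where "s = h - ?c"
  have s: "s \<in> {-d<..<b - d}" "0 < s" "s < b" using h \<open>\<bar>?c\<bar> < h\<close> assms unfolding s_def by auto
  have "s * \<bar>q\<bar> \<le> b * \<bar>q\<bar>" using s by (simp add: mult_right_mono)
  also have "\<dots> < (L0 b h - L0 b ?c) / 2" using h(3) by (simp add: field_simps)
  also have "\<dots> \<le> s * K1 b 0 ?c s"
    using K1_trapezoid_lower[OF lines_in_domain_H[OF assms] s(1)] by (simp add: s_def)
  finally have "s * \<bar>q\<bar> < s * K1 b 0 ?c s" .
  then have "q \<le> K1 b 0 ?c s" using s(2) by simp
  with s(1) that show ?thesis by blast
qed

lemma L0_le_quadratic:
  assumes "b > 0" "0 < h" "h < b" "\<bar>y\<bar> \<le> 1/2"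
  shows "L0 b (h * y) \<le> (4 * y^2 + 1/4) * L0 b (h/2)"
proof -
  have dom: "0 \<in> {-b/2<..<b/2}" "h/2 \<in> {-b/2<..<b/2}" using assms by auto
  have "L0 b (h * y) = L0 b \<bar>h * y\<bar>" by simp
  also have "\<dots> = L0 b ((1 - 2 * \<bar>y\<bar>) *\<^sub>R 0 + (2 * \<bar>y\<bar>) *\<^sub>R (h/2))"
    using assms(2) by (simp add: abs_mult mult.commute)
  also have "\<dots> \<le> (1 - 2 * \<bar>y\<bar>) * L0 b 0 + (2 * \<bar>y\<bar>) * L0 b (h/2)"
    by (rule convex_onD[OF convex_on_L0]) (use dom assms(4) in auto)
  also have "\<dots> = (2 * \<bar>y\<bar>) * L0 b (h/2)"
    using L0_zero[OF assms(1)] by simp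
  also have "\<dots> \<le> (4 * y^2 + 1/4) * L0 b (h/2)"
  proof (rule mult_right_mono)
    have "0 \<le> (2 * \<bar>y\<bar> - 1/2)^2" by simp
    then show "2 * \<bar>y\<bar> \<le> 4 * y^2 + 1/4" by (simp add: power2_eq_square algebra_simps)
    show "0 \<le> L0 b (h/2)" using L0_nonneg[OF assms(1) dom(2)] .
  qed
  finally show ?thesis .
qed

lemma K0_G_le:
  assumes "b > 0" "0 < h" "h < b"
  shows "K0 b (-1/2) 0 h \<le> 7/12 * L0 b (h/2)"
proof -
  have "h \<in> {-b<..<b}" using assms by auto
  from continuous_on_line[OF lines_in_domain_G[OF assms(1)] continuous_on_L0 this]
  have cont: "continuous_on {0..1} (\<lambda>x. L0 b (h * (x + -1/2) + 0))" .
  have "K0 b (-1/2) 0 h \<le> integral {0..1} (\<lambda>x. L0 b (h/2) / 4 + 4 * L0 b (h/2) * (x + -1/2)^2)"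
    unfolding K0_def
  proof (rule integral_le)
    fix x :: real assume "x \<in> {0..1}"
    then have "0 \<le> x" "x \<le> 1" by auto
    then have "L0 b (h * (x + -1/2)) \<le> (4 * (x + -1/2)^2 + 1/4) * L0 b (h/2)"
      using assms by (intro L0_le_quadratic) arith+
    then show "L0 b (h * (x + -1/2) + 0) \<le> L0 b (h/2) / 4 + 4 * L0 b (h/2) * (x + -1/2)^2"
      by (simp add: algebra_simps)
  qed (use cont in \<open>auto intro!: integrable_continuous_interval continuous_intros\<close>)
  also have "\<dots> = L0 b (h/2) / 4 + 4 * L0 b (h/2) * integral {0..1} (\<lambda>x. (x + -1/2)^2)"
    by (subst integral_add) (auto intro!: integrable_continuous_interval continuous_intros)
  also have "\<dots> = 7/12 * L0 b (h/2)"
    unfolding integral_shifted_square by simp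
  finally show ?thesis .
qed

lemma K1_G_unbounded:
  assumes "b > 0"
  obtains h where "h \<in> {-b<..<b}" "q \<le> K1 b (-1/2) 0 h"
proof -
  obtain z where z: "0 < z" "z < b/2" "12/5 * (b * \<bar>q\<bar>) < L0 b z"
    using L0_unbounded[OF assms] by blast
  define h where "h = 2 * z"
  have h: "0 < h" "h < b" "h \<in> {-b<..<b}" using z unfolding h_def by auto
  have "h * K1 b (-1/2) 0 h = L0 b (h/2) - K0 b (-1/2) 0 h"
    using K0_by_parts[OF lines_in_domain_G[OF assms] h(3)] L0_minus[of b "h/2"] by simp
  then have "5/12 * L0 b z \<le> h * K1 b (-1/2) 0 h"
    using K0_G_le[OF assms h(1,2)] unfolding h_def by simp
  moreover have "h * \<bar>q\<bar> \<le> b * \<bar>q\<bar>" using h by (simp add: mult_right_mono)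
  ultimately have "h * \<bar>q\<bar> < h * K1 b (-1/2) 0 h" using z(3) by linarith
  then have "q \<le> K1 b (-1/2) 0 h" using h(1) by simp
  with h(3) that show ?thesis by blast
qed

lemma htilde_nonneg:
  assumes "b > 0" "q \<ge> 0"
  shows "htilde b q \<ge> 0"
proof -
  note lines = lines_in_domain_G[OF assms(1)]
  obtain h' where h': "h' \<in> {-b<..<b}" "q \<le> K1 b (-1/2) 0 h'"
    using K1_G_unbounded[OF assms(1)] by blast
  have "0 \<in> {-b<..<b}" "K1 b (-1/2) 0 0 \<le> q"
    using assms unfolding K1_def by auto
  then obtain h where h: "0 \<le> h" "h \<le> h'" "K1 b (-1/2) 0 h = q"
    using K1_attains[OF lines _ h'(1) _ h'(2)] by blast
  then have hI: "h \<in> {-b<..<b}" using h' by auto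
  have "htilde b q = h"
    unfolding htilde_def
  proof (rule the_equality)
    show "0 \<le> h \<and> h < b \<and> deriv (Gf b) h = q"
      using h hI deriv_Gf[OF assms(1) hI] by auto
  next
    fix g assume "0 \<le> g \<and> g < b \<and> deriv (Gf b) g = q"
    moreover then have "g \<in> {-b<..<b}" using assms by auto
    ultimately show "g = h"
      using K1_inj[OF lines _ hI] deriv_Gf[OF assms(1)] h(3) by auto
  qed
  with h show ?thesis by simp
qed

lemma sdelta_eqI:
  assumes "0 < d" "d < b" "s \<in> {-d<..<b - d}" "K1 b 0 (d - b/2) s = q"
  shows "sdelta b d q = s"
  unfolding sdelta_def
proof (rule the_equality)
  show "- d < s \<and> s < b - d \<and> deriv (Hf b d) s = q"
    using assms deriv_Hf[OF assms(1-3)] by auto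
next
  fix t assume "- d < t \<and> t < b - d \<and> deriv (Hf b d) t = q"
  moreover then have "t \<in> {-d<..<b - d}" by auto
  ultimately show "t = s"
    using K1_inj[OF lines_in_domain_H[OF assms(1,2)] _ assms(3)] deriv_Hf[OF assms(1,2)] assms(4)
    by auto
qed

lemma sdelta_solves:
  assumes "0 < d" "d < b" "s \<in> {-d<..<b - d}" "K1 b 0 (d - b/2) s \<le> q"
  shows "sdelta b d q \<in> {-d<..<b - d}" "K1 b 0 (d - b/2) (sdelta b d q) = q" "s \<le> sdelta b d q"
proof -
  obtain t where t: "t \<in> {-d<..<b - d}" "q \<le> K1 b 0 (d - b/2) t"
    using K1_H_unbounded[OF assms(1,2)] by blast
  obtain u where u: "s \<le> u" "u \<le> t" "K1 b 0 (d - b/2) u = q"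
    using K1_attains[OF lines_in_domain_H[OF assms(1,2)] assms(3) t(1) assms(4) t(2)] by blast
  then have "u \<in> {-d<..<b - d}" using assms(3) t(1) by auto
  with u sdelta_eqI[OF assms(1,2)] show "sdelta b d q \<in> {-d<..<b - d}"
    "K1 b 0 (d - b/2) (sdelta b d q) = q" "s \<le> sdelta b d q" by auto
qed

lemma sdelta_K1:
  assumes "0 < d" "d < b" "s \<in> {-d<..<b - d}"
  shows "sdelta b d (K1 b 0 (d - b/2) s) = s"
  using sdelta_eqI[OF assms refl] .

lemma isCont_sdelta:
  assumes "0 < d" "d < b" "s \<in> {-d<..<b - d}"
  shows "isCont (sdelta b d) (K1 b 0 (d - b/2) s)"
proof (rule isCont_inverse_function2[of "(s - d)/2" s "(s + b - d)/2"])
  fix z assume "(s - d)/2 \<le> z" "z \<le> (s + b - d)/2"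
  then have z: "z \<in> {-d<..<b - d}" using assms(3) by auto
  show "sdelta b d (K1 b 0 (d - b/2) z) = z" by (rule sdelta_K1[OF assms(1,2) z])
  show "isCont (K1 b 0 (d - b/2)) z"
    by (rule DERIV_isCont[OF K1_has_real_derivative[OF lines_in_domain_H[OF assms(1,2)] z]])
qed (use assms in auto)

lemma sdelta_has_real_derivative:
  assumes "0 < d" "d < b" "s \<in> {-d<..<b - d}"
  shows "(sdelta b d has_real_derivative inverse (K2 b 0 (d - b/2) s)) (at (K1 b 0 (d - b/2) s))"
proof -
  note lines = lines_in_domain_H[OF assms(1,2)]
  let ?K1 = "K1 b 0 (d - b/2)"
  define u v where "u = (s - d)/2" and "v = (s + b - d)/2"
  have uv: "u \<in> {-d<..<b - d}" "v \<in> {-d<..<b - d}" "u < s" "s < v"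
    using assms(3) unfolding u_def v_def by auto
  show ?thesis
  proof (rule DERIV_inverse_function[where a = "?K1 u" and b = "?K1 v"])
    show "(?K1 has_real_derivative K2 b 0 (d - b/2) s) (at (sdelta b d (?K1 s)))"
      unfolding sdelta_K1[OF assms] by (rule K1_has_real_derivative[OF lines assms(3)])
    show "K2 b 0 (d - b/2) s \<noteq> 0" using K2_pos[OF lines assms(3)] by simp
    show "?K1 u < ?K1 s" "?K1 s < ?K1 v" using K1_strict_mono[OF lines] uv assms(3) by auto
    show "isCont (sdelta b d) (?K1 s)" by (rule isCont_sdelta[OF assms])
  next
    fix y assume "?K1 u < y" "y < ?K1 v"
    then obtain t where "u \<le> t" "t \<le> v" "?K1 t = y"
      using K1_attains[OF lines uv(1,2)] by (metis less_imp_le)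
    moreover then have "t \<in> {-d<..<b - d}" using uv by auto
    ultimately show "?K1 (sdelta b d y) = y" using sdelta_K1[OF assms(1,2)] by auto
  qed
qed

lemma legendre_has_real_derivative:
  assumes "0 < d" "d < b" "s \<in> {-d<..<b - d}"
  shows "((\<lambda>q. K0 b 0 (d - b/2) (sdelta b d q) - q * sdelta b d q) has_real_derivative - s)
           (at (K1 b 0 (d - b/2) s))"
proof -
  let ?q = "K1 b 0 (d - b/2) s"
  note lines = lines_in_domain_H[OF assms(1,2)]
  note D = sdelta_has_real_derivative[OF assms]
  have "((\<lambda>q. K0 b 0 (d - b/2) (sdelta b d q)) has_real_derivative
          ?q * inverse (K2 b 0 (d - b/2) s)) (at ?q)"
    using DERIV_chain2[OF K0_has_real_derivative[OF lines, of "sdelta b d ?q"] D]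
    unfolding sdelta_K1[OF assms] using assms(3) by simp
  from DERIV_diff[OF this DERIV_mult[OF DERIV_ident D]] show ?thesis
    unfolding sdelta_K1[OF assms] by simp
qed

section \<open>The constants beta_c, x_beta and deltacheck\<close>

lemma Gam_eq_poly: "Gam b = (exp (-b/2)^2 + exp (-b/2)^3) / (1 - exp (-b/2))"
proof -
  have "exp (-b) = exp (-b/2)^2" "exp (-3*b/2) = exp (-b/2)^3"
    by (simp_all add: power2_eq_square power3_eq_cube exp_add[symmetric])
  then show ?thesis unfolding Gam_def by simp
qed

lemma Gam_strict_antimono:
  assumes "0 < b1" "b1 < b2"
  shows "Gam b2 < Gam b1"
proof -
  define t1 t2 where "t1 = exp (-b2/2)" and "t2 = exp (-b1/2)"
  have t: "0 < t1" "t1 < t2" "t2 < 1" using assms unfolding t1_def t2_def by auto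
  then have "t1^2 + t1^3 \<le> t2^2 + t2^3"
    by (intro add_mono power_mono) auto
  moreover have "0 < t1^2 + t1^3" using t by (intro add_pos_pos) auto
  ultimately have "(t1^2 + t1^3) / (1 - t1) < (t2^2 + t2^3) / (1 - t2)"
    using t by (intro frac_less2) auto
  then show ?thesis unfolding Gam_eq_poly t1_def t2_def .
qed

lemma beta_c_spec: "0 < beta_c \<and> Gam beta_c = 1"
proof -
  define g :: "real \<Rightarrow> real" where "g t = (t^2 + t^3) / (1 - t)" for t
  have "continuous_on {1/2..3/4} g" unfolding g_def by (intro continuous_intros) auto
  moreover have "g (1/2) \<le> 1" "1 \<le> g (3/4)"
    unfolding g_def by (simp_all add: power2_eq_square power3_eq_cube)
  ultimately obtain t where t: "1/2 \<le> t" "t \<le> 3/4" "g t = 1"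
    using IVT'[of g "1/2" 1 "3/4"] by auto
  define b where "b = -2 * ln t"
  have "ln t < 0" using t by (intro ln_less_zero) auto
  then have b: "0 < b" "Gam b = 1"
    using t unfolding b_def Gam_eq_poly g_def by auto
  have "beta_c = b"
    unfolding beta_c_def
  proof (rule the_equality)
    fix b' assume "0 < b' \<and> Gam b' = 1"
    with b Gam_strict_antimono[of b b'] Gam_strict_antimono[of b' b] show "b' = b"
      by (cases b b' rule: linorder_cases) auto
  qed (use b in simp)
  with b show ?thesis by simp
qed

lemma Gam_above_beta_c:
  assumes "b > beta_c"
  shows "0 < b" "0 < Gam b" "Gam b < 1"
proof -
  show "0 < b" using beta_c_spec assms by linarith
  then show "0 < Gam b" unfolding Gam_eq_poly by (intro divide_pos_pos add_pos_pos) auto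
  show "Gam b < 1" using Gam_strict_antimono[of beta_c b] beta_c_spec assms by simp
qed

lemma xbeta_spec:
  assumes "b > beta_c"
  shows "0 < xbeta b" "xbeta b < b/2" "L0 b (xbeta b) = - ln (Gam b)"
proof -
  note b = Gam_above_beta_c[OF assms]
  define K where "K = - ln (Gam b)"
  have K: "K > 0" unfolding K_def using b by simp
  obtain h where h: "0 < h" "h < b/2" "K < L0 b h"
    using L0_unbounded[OF b(1)] by blast
  have "L0 b 0 \<le> K" "K \<le> L0 b h" "0 \<le> h"
    using L0_zero[OF b(1)] K h by auto
  moreover have "continuous_on {0..h} (L0 b)"
    by (rule continuous_on_subset[OF continuous_on_L0]) (use h in auto)
  ultimately obtain x where x: "0 \<le> x" "x \<le> h" "L0 b x = K"
    using IVT'[of "L0 b" 0 K h] by blast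
  moreover have "x \<noteq> 0" using x(3) K L0_zero[OF b(1)] by auto
  ultimately have x': "0 < x" "x < b/2" using h by auto
  have "xbeta b = x"
    unfolding xbeta_def
  proof (rule the_equality)
    have "Lf b x = L0 b x" using x' by (intro Lf_eq_L0 b(1)) auto
    with x x' show "0 < x \<and> x < b/2 \<and> Lf b x = - ln (Gam b)"
      unfolding K_def by simp
  next
    fix y assume y: "0 < y \<and> y < b/2 \<and> Lf b y = - ln (Gam b)"
    have "Lf b y = L0 b y" using y by (intro Lf_eq_L0 b(1)) auto
    with x(3) y have "L0 b y = L0 b x" unfolding K_def by simp
    with y x' show "y = x" by (intro L0_inj_nonneg[of y b x]) auto
  qed
  with x x' show "0 < xbeta b" "xbeta b < b/2" "L0 b (xbeta b) = - ln (Gam b)"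
    unfolding K_def by auto
qed

lemma deltacheck_eq:
  assumes "b > beta_c"
  shows "deltacheck b = b/2 + xbeta b"
  unfolding deltacheck_def
proof (rule the_equality)
  note b = Gam_above_beta_c(1)[OF assms] and x = xbeta_spec[OF assms]
  have "Lf b (xbeta b) = L0 b (xbeta b)" using x by (intro Lf_eq_L0 b) auto
  with x show "b/2 < b/2 + xbeta b \<and> b/2 + xbeta b < b \<and> Lf b (b/2 + xbeta b - b/2) = - ln (Gam b)"
    by simp
next
  note b = Gam_above_beta_c(1)[OF assms] and x = xbeta_spec[OF assms]
  fix d assume d: "b/2 < d \<and> d < b \<and> Lf b (d - b/2) = - ln (Gam b)"
  have "Lf b (d - b/2) = L0 b (d - b/2)" using d by (intro Lf_eq_L0 b) auto
  with d x(3) have "L0 b (d - b/2) = L0 b (xbeta b)" by simp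
  with d x have "d - b/2 = xbeta b" by (intro L0_inj_nonneg[of "d - b/2" b]) auto
  then show "d = b/2 + xbeta b" by simp
qed

lemma delta_c_nonneg:
  assumes "b > 0"
  shows "delta_c b \<ge> 0"
proof -
  define X where "X = (cosh b)^2 - exp b"
  have "1 \<le> cosh b" by (rule cosh_real_ge_1)
  have "2 * cosh b \<le> exp b + 1"
    using assms unfolding cosh_def by simp
  then have "X \<le> (cosh b - 1)^2" unfolding X_def by (simp add: power2_eq_square algebra_simps)
  then have "sqrt X \<le> cosh b - 1"
    using \<open>1 \<le> cosh b\<close> by (metis abs_of_nonneg diff_ge_0_iff_ge real_sqrt_abs real_sqrt_le_mono)
  then show ?thesis unfolding delta_c_def X_def[symmetric] by simp
qed

section \<open>Concavity and convexity of W\<close>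

lemma convex_on_indefinite_integral:
  fixes g :: "real \<Rightarrow> real"
  assumes cont: "continuous_on {0..1} g"
    and mono: "\<And>x y. 0 \<le> x \<Longrightarrow> x \<le> y \<Longrightarrow> y \<le> 1 \<Longrightarrow> g x \<le> g y"
    and W: "\<And>t. t \<in> {0..1} \<Longrightarrow> W t = integral {0..t} g"
  shows "convex_on {0..1} W"
proof (rule convex_on_linorderI)
  fix t x y :: real assume t: "0 < t" "t < 1" and xy: "x \<in> {0..1}" "y \<in> {0..1}" "x < y"
  let ?z = "(1 - t) * x + t * y"
  have "t * x \<le> t * y" "(1 - t) * x \<le> (1 - t) * y" using t xy by (auto intro!: mult_left_mono)
  then have z: "x \<le> ?z" "?z \<le> y" by (simp_all add: algebra_simps)
  have int: "g integrable_on {u..v}" if "0 \<le> u" "v \<le> 1" for u v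
    using that by (intro integrable_continuous_interval continuous_on_subset[OF cont]) auto
  have split: "W v - W u = integral {u..v} g" if "0 \<le> u" "u \<le> v" "v \<le> 1" for u v
    using Henstock_Kurzweil_Integration.integral_combine[of 0 u v g] int[of 0 v] that W[of u] W[of v]
    by auto
  have "W ?z - W x \<le> (?z - x) * g ?z"
    using integral_le[of g "{x..?z}" "\<lambda>_. g ?z"] int[of x ?z] split[of x ?z] z xy mono by auto
  then have A: "W ?z - W x \<le> t * ((y - x) * g ?z)" by (simp add: algebra_simps)
  have "(y - ?z) * g ?z \<le> W y - W ?z"
    using integral_le[of "\<lambda>_. g ?z" "{?z..y}" g] int[of ?z y] split[of ?z y] z xy mono by auto
  then have B: "(1 - t) * ((y - x) * g ?z) \<le> W y - W ?z" by (simp add: algebra_simps)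
  have "(1 - t) * (W ?z - W x) \<le> t * (W y - W ?z)"
    using mult_left_mono[OF A, of "1 - t"] mult_left_mono[OF B, of t] t by (simp add: algebra_simps)
  then show "W ((1 - t) *\<^sub>R x + t *\<^sub>R y) \<le> (1 - t) * W x + t * W y"
    by (simp add: algebra_simps)
qed (simp add: convex_real_interval)

lemma concave_on_indefinite_integral:
  fixes g :: "real \<Rightarrow> real"
  assumes "continuous_on {0..1} g"
    and "\<And>x y. 0 \<le> x \<Longrightarrow> x \<le> y \<Longrightarrow> y \<le> 1 \<Longrightarrow> g y \<le> g x"
    and "\<And>t. t \<in> {0..1} \<Longrightarrow> W t = integral {0..t} g"
  shows "concave_on {0..1} W"
  unfolding concave_on_def
  by (rule convex_on_indefinite_integral[where g = "\<lambda>x. - g x"]) (use assms in \<open>auto intro!: continuous_intros\<close>)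

lemma Wf_shape:
  assumes "0 < d" "d < b" and s: "sdelta b d (abar b d powr (-2)) \<in> {-d<..<b - d}"
  shows "0 \<le> sdelta b d (abar b d powr (-2)) \<Longrightarrow> concave_on {0..1} (Wf b d)"
    and "sdelta b d (abar b d powr (-2)) \<le> 0 \<Longrightarrow> convex_on {0..1} (Wf b d)"
proof -
  define s where "s = sdelta b d (abar b d powr (-2))"
  define g where "g x = L1 b (s * (1 - x) + d - b/2)" for x
  have arg: "s * (1 - x) + d - b/2 \<in> {-b/2<..<b/2}" if "x \<in> {0..1}" for x
  proof -
    have "(1 - x) * (s + d - b/2) + x * (d - b/2) \<in> {-b/2<..<b/2}"
      using that s assms(1,2) unfolding s_def by (intro convex_comb_in_domain) auto
    moreover have "(1 - x) * (s + d - b/2) + x * (d - b/2) = s * (1 - x) + d - b/2"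
      by (simp add: field_simps)
    ultimately show ?thesis by simp
  qed
  have cont: "continuous_on {0..1} g"
    unfolding g_def using arg by (intro continuous_on_compose_domain[OF continuous_on_L1] continuous_intros)
  have W: "Wf b d t = integral {0..t} g" if "t \<in> {0..1}" for t
    unfolding Wf_def s_def[symmetric]
  proof (rule integral_cong)
    fix x assume "x \<in> {0..t}"
    then have "x \<in> {0..1}" using that by auto
    then show "deriv (Lf b) (s * (1 - x) + d - b/2) = g x"
      unfolding g_def using assms(1,2) arg by (intro DERIV_imp_deriv Lf_has_real_derivative) auto
  qed
  show "concave_on {0..1} (Wf b d)" if "0 \<le> sdelta b d (abar b d powr (-2))"
  proof (rule concave_on_indefinite_integral[OF cont _ W])
    fix x y :: real assume "0 \<le> x" "x \<le> y" "y \<le> 1"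
    moreover have "s * (1 - y) \<le> s * (1 - x)"
      using that \<open>x \<le> y\<close> unfolding s_def by (intro mult_left_mono) auto
    ultimately show "g y \<le> g x" unfolding g_def by (intro L1_mono arg) auto
  qed
  show "convex_on {0..1} (Wf b d)" if "sdelta b d (abar b d powr (-2)) \<le> 0"
  proof (rule convex_on_indefinite_integral[OF cont _ W])
    fix x y :: real assume "0 \<le> x" "x \<le> y" "y \<le> 1"
    moreover have "s * (1 - x) \<le> s * (1 - y)"
      using that \<open>x \<le> y\<close> unfolding s_def by (intro mult_left_mono_neg) auto
    ultimately show "g x \<le> g y" unfolding g_def by (intro L1_mono arg) auto
  qed
qed

lemma Wf_concave_below_half:
  assumes "0 < d" "d \<le> b/2"
  shows "concave_on {0..1} (Wf b d)"
proof - \<comment> \<open>nothing is needed about \<open>abar b d\<close>: every \<open>q \<ge> 0\<close> gives \<open>sdelta b d q \<ge> 0\<close> here\<close>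
  let ?q = "abar b d powr (-2)"
  have "K1 b 0 (d - b/2) 0 = L1 b (d - b/2) / 2"
    unfolding K1_def using integral_affine_unit[of 0 "L1 b (d - b/2)"] by (simp add: mult.commute)
  also have "\<dots> \<le> 0" using L1_neg[of b "d - b/2"] assms by (cases "d = b/2") auto
  also have "0 \<le> ?q" by simp
  finally have "K1 b 0 (d - b/2) 0 \<le> ?q" .
  moreover have "0 \<in> {-d<..<b - d}" "d < b" using assms by auto
  ultimately show ?thesis
    using sdelta_solves[of d b 0 ?q] Wf_shape(1)[of d b] assms(1) by auto
qed

section \<open>The maximiser of T\<close>

lemma inverse_sqrt_compare:
  fixes a q :: real
  assumes "0 < a" "0 < q"
  shows "a < 1 / sqrt q \<longleftrightarrow> q < 1 / a^2" "1 / sqrt q < a \<longleftrightarrow> 1 / a^2 < q"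
proof -
  have "a < 1 / sqrt q \<longleftrightarrow> sqrt q < 1 / a" using assms by (simp add: field_simps)
  also have "\<dots> \<longleftrightarrow> sqrt q < sqrt ((1 / a)^2)" using assms by simp
  finally show "a < 1 / sqrt q \<longleftrightarrow> q < 1 / a^2" by (simp add: power_divide)
  have "1 / sqrt q < a \<longleftrightarrow> 1 / a < sqrt q" using assms by (simp add: field_simps)
  also have "\<dots> \<longleftrightarrow> sqrt ((1 / a)^2) < sqrt q" using assms by simp
  finally show "1 / sqrt q < a \<longleftrightarrow> 1 / a^2 < q" by (simp add: power_divide)
qed

context
  fixes b d :: real
  assumes beta: "b > beta_c" and d: "b/2 < d" "d < b"
    and slope: "K1 b 0 (d - b/2) (b/2 - d - xbeta b) \<le> 0"
begin

lemma regime_pos: "0 < b" "0 < d"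
  using Gam_above_beta_c(1)[OF beta] d by auto

lemma lines_in_domain_regime: "lines_in_domain b 0 (d - b/2) (-d) (b - d)"
  using lines_in_domain_H[OF regime_pos(2) d(2)] .

lemma sdelta_of_nonneg:
  assumes "0 \<le> q"
  shows "sdelta b d q \<in> {-d<..<b - d}" "K1 b 0 (d - b/2) (sdelta b d q) = q"
    "b/2 - d - xbeta b \<le> sdelta b d q"
proof -
  have "b/2 - d - xbeta b \<in> {-d<..<b - d}" using xbeta_spec[OF beta] d by auto
  from sdelta_solves[OF regime_pos(2) d(2) this] slope assms
  show "sdelta b d q \<in> {-d<..<b - d}" "K1 b 0 (d - b/2) (sdelta b d q) = q"
    "b/2 - d - xbeta b \<le> sdelta b d q" by auto
qed

lemma Tf_eq_K0:
  assumes "0 < a"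
  shows "Tf b d a = a * ln (Gam b)
    + a * (K0 b 0 (d - b/2) (sdelta b d (1/a^2)) - 1/a^2 * sdelta b d (1/a^2))"
proof -
  have "0 \<le> htilde b (1/a^2)" using regime_pos(1) by (intro htilde_nonneg) auto
  then have "\<not> d \<le> delta0 b (1/a^2)" using d unfolding delta0_def by auto
  then show ?thesis
    unfolding Tf_def psi_def
    using Hf_eq_K0[OF regime_pos(2) d(2) sdelta_of_nonneg(1)] by simp
qed

lemma Tf_has_real_derivative:
  assumes "0 < a"
  shows "(Tf b d has_real_derivative ln (Gam b) + L0 b (sdelta b d (1/a^2) + (d - b/2))) (at a)"
proof -
  let ?c = "d - b/2" and ?q = "1/a^2"
  define s where "s = sdelta b d ?q"
  have s: "s \<in> {-d<..<b - d}" "K1 b 0 ?c s = ?q"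
    using sdelta_of_nonneg[of ?q] unfolding s_def by auto
  have "((\<lambda>a. 1/a^2) has_real_derivative -(2/a^3)) (at a)"
    using assms by (auto intro!: derivative_eq_intros simp: power2_eq_square power3_eq_cube field_simps)
  from DERIV_chain2[OF legendre_has_real_derivative[OF regime_pos(2) d(2) s(1), unfolded s(2)] this]
  have "((\<lambda>a. K0 b 0 ?c (sdelta b d (1/a^2)) - 1/a^2 * sdelta b d (1/a^2)) has_real_derivative
          (- s) * (-(2/a^3))) (at a)" .
  from DERIV_add[OF DERIV_cmult_right[OF DERIV_ident, of "ln (Gam b)"] DERIV_mult[OF DERIV_ident this]]
  have "((\<lambda>a. a * ln (Gam b) + a * (K0 b 0 ?c (sdelta b d (1/a^2)) - 1/a^2 * sdelta b d (1/a^2)))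
          has_real_derivative ln (Gam b) + (K0 b 0 ?c s + ?q * s)) (at a)"
    using assms unfolding s_def[symmetric]
    by (simp add: power2_eq_square power3_eq_cube field_simps)
  moreover have "K0 b 0 ?c s + ?q * s = L0 b (s + ?c)" \<comment> \<open>since \<open>?q = K1 b 0 ?c s\<close>\<close>
    using K0_by_parts[OF lines_in_domain_regime s(1)] s(2) by simp
  ultimately have "((\<lambda>a. a * ln (Gam b) + a * (K0 b 0 ?c (sdelta b d (1/a^2)) - 1/a^2 * sdelta b d (1/a^2)))
          has_real_derivative ln (Gam b) + L0 b (s + ?c)) (at a)" by simp
  then show ?thesis
    unfolding s_def
    by (rule has_field_derivative_transform_within_open[where S = "{0<..}"]) (use assms Tf_eq_K0 in auto)
qed

lemma K1_at_xbeta_pos: "0 < K1 b 0 (d - b/2) (xbeta b - (d - b/2))"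
proof -
  let ?c = "d - b/2" and ?s = "xbeta b - (d - b/2)"
  define \<mu> where "\<mu> = min ?c (xbeta b)"
  have x: "0 < xbeta b" "xbeta b < b/2" using xbeta_spec[OF beta] by auto
  have \<mu>: "0 < \<mu>" "\<mu> < b/2" unfolding \<mu>_def using d x by (auto simp: min_def)
  have s: "?s \<in> {-d<..<b - d}" using x d by auto
  note lines = lines_in_domain_regime
  note cont = continuous_on_line[OF lines continuous_on_L1 s]
  have "integral {0..1} (\<lambda>x. 0 + L1 b \<mu> * x) \<le> K1 b 0 ?c ?s"
    unfolding K1_def
  proof (rule integral_le)
    fix x :: real assume x01: "x \<in> {0..1}"
    have "?s * (x + 0) + ?c = (1 - x) * ?c + x * xbeta b" by (simp add: field_simps)
    moreover have "(1 - x) * \<mu> \<le> (1 - x) * ?c" "x * \<mu> \<le> x * xbeta b"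
      using x01 unfolding \<mu>_def by (auto intro!: mult_left_mono)
    then have "\<mu> \<le> (1 - x) * ?c + x * xbeta b" by (simp add: algebra_simps)
    ultimately have "L1 b \<mu> \<le> L1 b (?s * (x + 0) + ?c)"
      using line_in_domain[OF lines s x01] \<mu> by (intro L1_mono) auto
    with x01 show "0 + L1 b \<mu> * x \<le> (x + 0) * L1 b (?s * (x + 0) + ?c)"
      by (simp add: mult.commute mult_left_mono)
  qed (use cont in \<open>auto intro!: integrable_continuous_interval continuous_intros\<close>)
  moreover have "0 < L1 b \<mu>" using \<mu> by (rule L1_pos)
  ultimately show ?thesis unfolding integral_affine_unit by linarith
qed

lemma Tf_deriv_pos:
  assumes "0 < a" "K1 b 0 (d - b/2) (xbeta b - (d - b/2)) < 1/a^2"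
  shows "0 < ln (Gam b) + L0 b (sdelta b d (1/a^2) + (d - b/2))"
proof -
  let ?s = "sdelta b d (1/a^2)"
  note s = sdelta_of_nonneg[of "1/a^2"]
  have "xbeta b - (d - b/2) < ?s"
    using K1_mono[OF lines_in_domain_regime s(1), of "xbeta b - (d - b/2)"]
      xbeta_spec[OF beta] d s(2) assms(2) by force
  then have "L0 b (xbeta b) < L0 b (?s + (d - b/2))"
    using xbeta_spec[OF beta] s(1) by (intro L0_strict_mono) auto
  then show ?thesis using xbeta_spec(3)[OF beta] by simp
qed

lemma Tf_deriv_neg:
  assumes "0 < a" "1/a^2 < K1 b 0 (d - b/2) (xbeta b - (d - b/2))"
  shows "ln (Gam b) + L0 b (sdelta b d (1/a^2) + (d - b/2)) < 0"
proof -
  let ?s = "sdelta b d (1/a^2)"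
  note s = sdelta_of_nonneg[of "1/a^2"]
  have "?s < xbeta b - (d - b/2)"
    using K1_mono[OF lines_in_domain_regime _ s(1), of "xbeta b - (d - b/2)"]
      xbeta_spec[OF beta] d s(2) assms(2) by force
  moreover have "?s \<noteq> b/2 - d - xbeta b" using s(2) slope assms(1) by force
  ultimately have "\<bar>?s + (d - b/2)\<bar> < xbeta b" using s(3) by auto
  then have "L0 b (?s + (d - b/2)) < L0 b (xbeta b)"
    using L0_strict_mono[of "\<bar>?s + (d - b/2)\<bar>" "xbeta b" b] xbeta_spec[OF beta] by simp
  then show ?thesis using xbeta_spec(3)[OF beta] by simp
qed

lemma Tf_less_at_opt:
  defines "a\<^sub>0 \<equiv> 1 / sqrt (K1 b 0 (d - b/2) (xbeta b - (d - b/2)))"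
  assumes "0 < a" "a \<noteq> a\<^sub>0"
  shows "Tf b d a < Tf b d a\<^sub>0"
proof -
  note q0 = K1_at_xbeta_pos
  have a0: "0 < a\<^sub>0" unfolding a\<^sub>0_def using q0 by simp
  have cont: "continuous_on {u..v} (Tf b d)" if "0 < u" for u v
    using that by (intro continuous_at_imp_continuous_on ballI DERIV_isCont[OF Tf_has_real_derivative]) auto
  consider "a < a\<^sub>0" | "a\<^sub>0 < a" using assms(3) by linarith
  then show ?thesis
  proof cases
    case 1
    show ?thesis
    proof (rule DERIV_pos_imp_increasing_open[OF 1 _ cont[OF assms(2)]])
      fix x assume "a < x" "x < a\<^sub>0"
      with assms(2) q0 show "\<exists>y. (Tf b d has_real_derivative y) (at x) \<and> 0 < y"
        by (intro exI[of _ "ln (Gam b) + L0 b (sdelta b d (1/x^2) + (d - b/2))"]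
            conjI Tf_has_real_derivative Tf_deriv_pos)
           (auto simp: a\<^sub>0_def inverse_sqrt_compare)
    qed
  next
    case 2
    show ?thesis
    proof (rule DERIV_neg_imp_decreasing_open[OF 2 _ cont[OF a0]])
      fix x assume x: "a\<^sub>0 < x" "x < a"
      moreover from x a0 have "0 < x" by linarith
      ultimately show "\<exists>y. (Tf b d has_real_derivative y) (at x) \<and> y < 0"
        by (intro exI[of _ "ln (Gam b) + L0 b (sdelta b d (1/x^2) + (d - b/2))"]
            conjI Tf_has_real_derivative Tf_deriv_neg)
           (use q0 in \<open>auto simp: a\<^sub>0_def inverse_sqrt_compare\<close>)
    qed
  qed
qed

lemma sdelta_abar: "sdelta b d (abar b d powr (-2)) = xbeta b - (d - b/2)"
proof -
  define q\<^sub>0 where "q\<^sub>0 = K1 b 0 (d - b/2) (xbeta b - (d - b/2))"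
  have q0: "0 < q\<^sub>0" unfolding q\<^sub>0_def by (rule K1_at_xbeta_pos)
  have "abar b d = 1 / sqrt q\<^sub>0"
    unfolding abar_def
  proof (rule the_equality)
    show "0 < 1 / sqrt q\<^sub>0 \<and> (\<forall>a'. 0 < a' \<longrightarrow> Tf b d a' \<le> Tf b d (1 / sqrt q\<^sub>0))"
      using q0 Tf_less_at_opt unfolding q\<^sub>0_def by (fastforce simp: less_imp_le)
  next
    fix a assume "0 < a \<and> (\<forall>a'. 0 < a' \<longrightarrow> Tf b d a' \<le> Tf b d a)"
    with q0 Tf_less_at_opt show "a = 1 / sqrt q\<^sub>0"
      unfolding q\<^sub>0_def by (metis divide_pos_pos linorder_not_less real_sqrt_gt_zero zero_less_one)
  qed
  then have "abar b d powr (-2) = (1 / sqrt q\<^sub>0) powr (-2)" by simp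
  also have "\<dots> = q\<^sub>0" using q0 by (simp add: powr_minus powr_realpow divide_simps)
  finally have "abar b d powr (-2) = q\<^sub>0" .
  moreover have "sdelta b d q\<^sub>0 = xbeta b - (d - b/2)"
    unfolding q\<^sub>0_def using xbeta_spec[OF beta] d by (intro sdelta_K1 regime_pos(2)) auto
  ultimately show ?thesis by simp
qed

lemma Wf_concave_regime:
  assumes "d \<le> deltacheck b"
  shows "concave_on {0..1} (Wf b d)"
  using Wf_shape(1)[OF regime_pos(2) d(2)] sdelta_abar xbeta_spec[OF beta] deltacheck_eq[OF beta] d assms
  by auto

lemma Wf_convex_regime:
  assumes "deltacheck b \<le> d"
  shows "convex_on {0..1} (Wf b d)"
  using Wf_shape(2)[OF regime_pos(2) d(2)] sdelta_abar xbeta_spec[OF beta] deltacheck_eq[OF beta] d assms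
  by auto

end

section \<open>The sign of H' at b/2 - d - x_beta\<close>

lemma slope_nonpos_below_deltacheck:
  assumes beta: "b > beta_c" and d: "b/2 < d" "d < deltacheck b"
  shows "K1 b 0 (d - b/2) (b/2 - d - xbeta b) \<le> 0"
proof -
  let ?c = "d - b/2" and ?s = "b/2 - d - xbeta b"
  note x = xbeta_spec[OF beta]
  have c: "0 < ?c" "?c < xbeta b" using d deltacheck_eq[OF beta] by auto
  have db: "0 < d" "d < b" using c x by auto
  have s: "?s \<in> {-d<..<b - d}" "?s < 0" using x c by auto
  have "L0 b ?c \<le> L0 b (xbeta b)" using c x by (intro L0_mono_abs) auto
  then have "0 \<le> (0 + 1/2) * (L0 b (?s * (1 + 0) + ?c) - L0 b (?s * 0 + ?c))"
    using L0_minus[of b "xbeta b"] by simp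
  also have "\<dots> \<le> ?s * K1 b 0 ?c ?s"
    by (rule K1_trapezoid_lower[OF lines_in_domain_H[OF db] s(1)])
  finally show ?thesis using s(2) by (simp add: mult_le_0_iff zero_le_mult_iff)
qed

lemma continuous_on_slope_at_minus_xbeta:
  assumes "b > beta_c"
  shows "continuous_on {0<..<b} (\<lambda>d. K1 b 0 (d - b/2) (b/2 - d - xbeta b))"
proof -
  have x: "- xbeta b \<in> {-b/2<..<b/2}" using xbeta_spec[OF assms] by auto
  have "continuous_on ({0<..<b} \<times> {0..1})
          (\<lambda>(d, x). (x + 0) * L1 b ((b/2 - d - xbeta b) * (x + 0) + (d - b/2)))"
    unfolding case_prod_beta
  proof (intro continuous_intros continuous_on_compose_domain[OF continuous_on_L1])
    fix z :: "real \<times> real" assume "z \<in> {0<..<b} \<times> {0..1}"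
    then have "(1 - snd z) * (fst z - b/2) + snd z * (- xbeta b) \<in> {-b/2<..<b/2}"
      using x by (intro convex_comb_in_domain) auto
    moreover have "(b/2 - fst z - xbeta b) * (snd z + 0) + (fst z - b/2)
        = (1 - snd z) * (fst z - b/2) + snd z * (- xbeta b)"
      by (simp add: field_simps)
    ultimately show "(b/2 - fst z - xbeta b) * (snd z + 0) + (fst z - b/2) \<in> {-b/2<..<b/2}"
      by simp
  qed
  from integral_continuous_on_param[OF this[unfolded cbox_interval[symmetric]]]
  show ?thesis unfolding K1_def cbox_interval .
qed

lemma slope_nonpos_below_deltabar:
  assumes beta: "b > beta_c" and d: "0 < d" "d < b" "d \<le> deltabar b"
  shows "K1 b 0 (d - b/2) (b/2 - d - xbeta b) \<le> 0"
proof (rule ccontr)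
  define F where "F d' = K1 b 0 (d' - b/2) (b/2 - d' - xbeta b)" for d'
  define S where "S = {d'. 0 < d' \<and> d' < b \<and> deriv (Hf b d') (b/2 - d' - xbeta b) > 0}"
  have S: "S = {d'. 0 < d' \<and> d' < b \<and> 0 < F d'}"
    unfolding S_def F_def using xbeta_spec[OF beta] by (auto simp: deriv_Hf)
  assume "\<not> K1 b 0 (d - b/2) (b/2 - d - xbeta b) \<le> 0"
  then have "0 < F d" unfolding F_def by simp
  then have "d \<in> S" using d unfolding S by simp
  then have "d \<le> Inf S" using d(3) unfolding deltabar_def S_def[symmetric] by (cases "S = {}") auto
  have "isCont F d"
    using continuous_on_slope_at_minus_xbeta[OF beta] d unfolding F_def
    by (simp add: continuous_on_eq_continuous_at)
  then have "(F \<longlongrightarrow> F d) (at_left d)"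
    by (simp add: isCont_def filterlim_at_split)
  then have "\<forall>\<^sub>F y in at_left d. 0 < F y \<and> y \<in> {0<..<d}"
    using \<open>0 < F d\<close> d(1) by (intro eventually_conj order_tendstoD(1) eventually_at_left_real)
  then obtain y where "0 < F y" "0 < y" "y < d"
    using eventually_happens'[OF trivial_limit_at_left_real] by fastforce
  then have "y \<in> S" using d unfolding S by simp
  moreover have "bdd_below S" unfolding S by (rule bdd_belowI[of _ 0]) auto
  ultimately have "Inf S \<le> y" by (rule cInf_lower)
  with \<open>d \<le> Inf S\<close> \<open>y < d\<close> show False by linarith
qed

theorem proposition2p6:
  fixes b d :: real
  assumes "b > beta_c" and "0 \<le> d" and "d < b" and "d \<le> deltabar b"
  shows "(delta_c b < d \<and> d < deltacheck b \<longrightarrow> concave_on {0..1} (Wf b d))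
       \<and> (deltacheck b < d \<and> d < b \<longrightarrow> convex_on {0..1} (Wf b d))"
proof (intro conjI impI)
  note b = Gam_above_beta_c(1)[OF assms(1)]
  have half_lt_deltacheck: "b/2 < deltacheck b"
    using deltacheck_eq[OF assms(1)] xbeta_spec[OF assms(1)] by simp
  show "concave_on {0..1} (Wf b d)" if d: "delta_c b < d \<and> d < deltacheck b"
  proof (cases "d \<le> b/2")
    case True
    with d delta_c_nonneg[OF b] show ?thesis by (intro Wf_concave_below_half) auto
  next
    case False
    with d slope_nonpos_below_deltacheck[OF assms(1)] show ?thesis
      by (intro Wf_concave_regime[OF assms(1) _ assms(3)]) auto
  qed
  show "convex_on {0..1} (Wf b d)" if d: "deltacheck b < d \<and> d < b"
    using d half_lt_deltacheck b slope_nonpos_below_deltabar[OF assms(1) _ assms(3,4)]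
    by (intro Wf_convex_regime[OF assms(1) _ assms(3)]) auto
qed

end
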